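(* Every strongly regular graph with girth five has no quantum symmetry. In particular, the Hoffman–Singleton graph has no quantum symmetry.
   Context: A $k$-regular graph on $n$ vertices is strongly regular with parameters $(n,k,\lambda,\mu)$ if adjacent vertices have exactly $\lambda$ common neighbors and non-adjacent distinct vertices have exactly $\mu$ common neighbors. The girth is the length of a shortest cycle. The Hoffman–Singleton graph is the strongly regular graph with parameters $(50,7,0,1)$. For a finite simple undirected graph $\Gamma=(V,E)$ with $V=\{1,\dots,n\}$, $C(G_{aut}^+(\Gamma))$ is the universal unital $C^*$-algebra generated by $u_{ij}$, $1\le i,j\le n$, with relations: (R1) $u_{ij}=u_{ij}^*=u_{ij}^2$; (R2) $\sum_{l} u_{il}=1=\sum_{l} u_{li}$ for all $i$; (R3) $u_{ij}u_{kl}=u_{kl}u_{ij}=0$ whenever exactly one of $(i,k)\in E$, $(j,l)\in E$ holds. $\Gamma$ has no quantum symmetry if $C(G_{aut}^+(\Gamma))$ is commutative. *)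

theory Defs
  imports Complex_Main "HOL-Library.Extended_Nat"
begin

definition simple_graph :: "nat \<Rightarrow> (nat \<Rightarrow> nat \<Rightarrow> bool) \<Rightarrow> bool" where
  "simple_graph n E \<longleftrightarrow>
     (\<forall>x y. E x y \<longrightarrow> x \<in> {1..n} \<and> y \<in> {1..n}) \<and>
     (\<forall>x y. E x y \<longrightarrow> E y x) \<and> (\<forall>x. \<not> E x x)"

definition neighbours :: "nat \<Rightarrow> (nat \<Rightarrow> nat \<Rightarrow> bool) \<Rightarrow> nat \<Rightarrow> nat set" where
  "neighbours n E x = {y \<in> {1..n}. E x y}"

definition strongly_regular ::
  "nat \<Rightarrow> (nat \<Rightarrow> nat \<Rightarrow> bool) \<Rightarrow> nat \<Rightarrow> nat \<Rightarrow> nat \<Rightarrow> bool" where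
  "strongly_regular n E k lam mu \<longleftrightarrow>
     simple_graph n E \<and>
     (\<forall>x\<in>{1..n}. card (neighbours n E x) = k) \<and>
     (\<forall>x\<in>{1..n}. \<forall>y\<in>{1..n}. E x y \<longrightarrow>
        card (neighbours n E x \<inter> neighbours n E y) = lam) \<and>
     (\<forall>x\<in>{1..n}. \<forall>y\<in>{1..n}. x \<noteq> y \<longrightarrow> \<not> E x y \<longrightarrow>
        card (neighbours n E x \<inter> neighbours n E y) = mu)"

definition has_cycle :: "nat \<Rightarrow> (nat \<Rightarrow> nat \<Rightarrow> bool) \<Rightarrow> nat \<Rightarrow> bool" where
  "has_cycle n E m \<longleftrightarrow> 3 \<le> m \<and>
     (\<exists>v :: nat \<Rightarrow> nat. inj_on v {..<m} \<and> v ` {..<m} \<subseteq> {1..n} \<and>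
        (\<forall>i<m. E (v i) (v (Suc i mod m))))"

text \<open>Girth: length of a shortest cycle (infinity if the graph is acyclic).\<close>
definition girth :: "nat \<Rightarrow> (nat \<Rightarrow> nat \<Rightarrow> bool) \<Rightarrow> enat" where
  "girth n E = (INF m\<in>{m. has_cycle n E m}. enat m)"

locale cstar_algebra =
  fixes smul :: "complex \<Rightarrow> 'a::ring_1 \<Rightarrow> 'a"
    and star :: "'a \<Rightarrow> 'a"
    and nrm :: "'a \<Rightarrow> real"
  assumes smul_add_right: "smul c (x + y) = smul c x + smul c y"
    and smul_add_left: "smul (c + d) x = smul c x + smul d x"
    and smul_mult: "smul (c * d) x = smul c (smul d x)"
    and smul_one: "smul 1 x = x"
    and smul_times_left: "smul c (x * y) = smul c x * y"
    and smul_times_right: "smul c (x * y) = x * smul c y"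
    and star_star: "star (star x) = x"
    and star_add: "star (x + y) = star x + star y"
    and star_mult: "star (x * y) = star y * star x"
    and star_smul: "star (smul c x) = smul (cnj c) (star x)"
    and nrm_zero_iff: "nrm x = 0 \<longleftrightarrow> x = 0"
    and nrm_triangle: "nrm (x + y) \<le> nrm x + nrm y"
    and nrm_smul: "nrm (smul c x) = cmod c * nrm x"
    and nrm_mult: "nrm (x * y) \<le> nrm x * nrm y"
    and nrm_complete: "(\<forall>e>0. \<exists>N. \<forall>m\<ge>N. \<forall>k\<ge>N. nrm (X m - X k) < e) \<Longrightarrow>
                        \<exists>L. (\<lambda>m. nrm (X m - L)) \<longlonglongrightarrow> 0"
    and cstar_identity: "nrm (star x * x) = (nrm x)\<^sup>2"

text \<open>u is a family in a unital *-algebra satisfying relations (R1)-(R3) of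
  C(G_aut^+(Gamma)) for the graph ({1..n}, E).\<close>
definition graph_magic_unitary ::
  "('a::ring_1 \<Rightarrow> 'a) \<Rightarrow> nat \<Rightarrow> (nat \<Rightarrow> nat \<Rightarrow> bool) \<Rightarrow> (nat \<Rightarrow> nat \<Rightarrow> 'a) \<Rightarrow> bool" where
  "graph_magic_unitary star n E u \<longleftrightarrow>
     (\<forall>i\<in>{1..n}. \<forall>j\<in>{1..n}. star (u i j) = u i j \<and> u i j * u i j = u i j) \<and>
     (\<forall>i\<in>{1..n}. (\<Sum>l\<in>{1..n}. u i l) = 1 \<and> (\<Sum>l\<in>{1..n}. u l i) = 1) \<and>
     (\<forall>i\<in>{1..n}. \<forall>j\<in>{1..n}. \<forall>k\<in>{1..n}. \<forall>l\<in>{1..n}.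
        E i k \<noteq> E j l \<longrightarrow> u i j * u k l = 0 \<and> u k l * u i j = 0)"

end

theory Submission
  imports Defs
begin

text \<open>Girth five makes the graph triangle-free and gives any two distinct vertices at most one
  common neighbour; strong regularity, applied to a path of length two on a 5-cycle, then yields
  exactly one common neighbour for non-adjacent vertices and degree at least two. Relation (R3)
  lets a product u_ab u_cd factor through u_mm', where m and m' are the common neighbours of a, c
  and of b, d. For adjacent pairs i ~ k and j ~ l this gives pqpq = pqpqp for the projections
  p = u_ij and q = u_kl, which in a C*-algebra forces pq = qp. For non-adjacent pairs both
  products factor through c = u_kl, and modulo c the generators u_ij and u_xy can be replaced by
  partial row sums over two adjacent rows, which commute by the adjacent case.\<close>

context cstar_algebra
begin

lemma star_zero: "star 0 = 0"
  using star_add[of 0 0] by simp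

lemma star_diff: "star (x - y) = star x - star y"
  using star_add[of "x - y" y] by (simp add: algebra_simps)

lemma star_sum: "finite A \<Longrightarrow> star (sum f A) = (\<Sum>x\<in>A. star (f x))"
  by (induct A rule: finite_induct) (simp_all add: star_zero star_add)

lemma star_mult_self_eq_zeroD:
  assumes "star x * x = 0"
  shows "x = 0"
proof -
  have "(nrm x)\<^sup>2 = 0"
    using assms cstar_identity[of x] nrm_zero_iff[of 0] by simp
  then show ?thesis
    using nrm_zero_iff by simp
qed

(* With z = pqp and y = pq - z the hypothesis says zy = 0 while yy* = z - z^2; hence z^3 = z^2,
   so the self-adjoint z - z^2 squares to 0 and vanishes. Then yy* = 0, so y = 0 and
   pq = z = z* = qp. *)
lemma projections_commute:
  assumes p: "star p = p" "p * p = p" and q: "star q = q" "q * q = q"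
    and pqpq: "p * q * p * q = p * q * p * q * p"
  shows "p * q = q * p"
proof -
  define z where "z = p * q * p"
  define y where "y = p * q - z"
  have pp: "p * (p * x) = p * x" and qq: "q * (q * x) = q * x" for x
    using p q by (metis mult.assoc)+
  have star_z: "star z = z"
    unfolding z_def using p q by (simp add: star_mult mult.assoc)
  have star_y: "star y = q * p - z"
    unfolding y_def using p q star_z by (simp add: star_diff star_mult)
  have zy: "z * y = 0"
    unfolding y_def z_def using pqpq by (simp add: algebra_simps pp)
  have y_star_y: "y * star y = z - z * z"
    unfolding star_y unfolding y_def z_def by (simp add: algebra_simps pp qq)
  have "z * (z - z * z) = z * y * star y"
    using y_star_y by (simp add: mult.assoc)
  then have z3: "z * z * z = z * z"
    using zy by (simp add: algebra_simps)
  then have z4: "z * z * z * z = z * z"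
    by (metis mult.assoc)
  have "star (z - z * z) * (z - z * z) = z * z - z * z * z - z * z * z + z * z * z * z"
    by (simp add: star_diff star_mult star_z algebra_simps)
  also have "\<dots> = 0"
    using z3 z4 by simp
  finally have "z - z * z = 0"
    by (rule star_mult_self_eq_zeroD)
  then have "star y = 0"
    using y_star_y star_star by (metis star_mult_self_eq_zeroD)
  then have "y = 0"
    using star_star star_zero by metis
  then have "p * q = z"
    unfolding y_def by simp
  moreover have "q * p = star z"
    using calculation p q by (metis star_mult)
  ultimately show ?thesis
    using star_z by simp
qed

end

lemma has_cycle_of_list:
  assumes "distinct vs" "3 \<le> length vs" "set vs \<subseteq> {1..n}"
    and "\<forall>i<length vs. E (vs ! i) (vs ! (Suc i mod length vs))"
  shows "has_cycle n E (length vs)"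
  unfolding has_cycle_def using assms
  by (auto simp: distinct_conv_nth inj_on_def intro!: exI[of _ "(!) vs"])

lemma simple_graph_triangle_has_cycle:
  assumes "simple_graph n E" "E x y" "E y z" "E z x"
  shows "has_cycle n E 3"
proof -
  have "x \<noteq> y" "y \<noteq> z" "z \<noteq> x"
    and "x \<in> {1..n}" "y \<in> {1..n}" "z \<in> {1..n}"
    using assms unfolding simple_graph_def by metis+
  then have "has_cycle n E (length [x, y, z])"
    using assms(2-) by (intro has_cycle_of_list) (simp_all add: All_less_Suc)
  then show ?thesis by (simp add: eval_nat_numeral)
qed

lemma simple_graph_square_has_cycle:
  assumes "simple_graph n E" "x \<noteq> z" "m \<noteq> m'" "E x m" "E m z" "E z m'" "E m' x"
  shows "has_cycle n E 4"
proof -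
  have "x \<noteq> m" "m \<noteq> z" "z \<noteq> m'" "m' \<noteq> x"
    and "x \<in> {1..n}" "m \<in> {1..n}" "z \<in> {1..n}" "m' \<in> {1..n}"
    using assms unfolding simple_graph_def by metis+
  then have "has_cycle n E (length [x, m, z, m'])"
    using assms(2-) by (intro has_cycle_of_list) (simp_all add: All_less_Suc)
  then show ?thesis by (simp add: eval_nat_numeral)
qed

lemma girth_le_cycle_length: "has_cycle n E m \<Longrightarrow> girth n E \<le> enat m"
  unfolding girth_def by (rule INF_lower) simp

lemma has_cycle_girth:
  assumes "girth n E = enat g"
  shows "has_cycle n E g"
proof -
  have "girth n E < enat (Suc g)"
    using assms by simp
  then obtain m where "has_cycle n E m" "m < Suc g"
    unfolding girth_def by (auto simp: INF_less_iff)
  moreover from this(1) have "g \<le> m"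
    using girth_le_cycle_length assms by fastforce
  ultimately show ?thesis
    by (metis le_antisym less_Suc_eq_le)
qed

lemma has_cycle_obtain_path:
  assumes "has_cycle n E m"
  obtains x y z where "E x y" "E y z" "x \<noteq> z"
proof -
  obtain v where m: "3 \<le> m" and "inj_on v {..<m}" and cycle: "\<forall>i<m. E (v i) (v (Suc i mod m))"
    using assms unfolding has_cycle_def by blast
  have "E (v 0) (v 1)" "E (v 1) (v 2)"
    using cycle[rule_format, of 0] cycle[rule_format, of 1] m by (simp_all add: numeral_2_eq_2)
  moreover have "v 0 \<noteq> v 2"
    using inj_onD[OF \<open>inj_on v {..<m}\<close>, of 0 2] m by auto
  ultimately show ?thesis
    using that by simp
qed

lemma simple_graph_triangle_free:
  assumes "simple_graph n E" "3 < girth n E" "E x y" "E y z"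
  shows "\<not> E x z"
proof
  assume "E x z"
  then have "E z x"
    using assms(1) unfolding simple_graph_def by blast
  then have "girth n E \<le> 3"
    using girth_le_cycle_length simple_graph_triangle_has_cycle[OF assms(1,3,4)]
    by (simp add: numeral_eq_enat)
  with assms(2) show False
    by simp
qed

lemma simple_graph_common_neighbour_unique:
  assumes "simple_graph n E" "4 < girth n E" "x \<noteq> z" "E x m" "E m z" "E x m'" "E m' z"
  shows "m = m'"
proof (rule ccontr)
  assume "m \<noteq> m'"
  moreover have "E z m'" "E m' x"
    using assms(1,6,7) unfolding simple_graph_def by blast+
  ultimately have "girth n E \<le> 4"
    using girth_le_cycle_length simple_graph_square_has_cycle[OF assms(1,3) _ assms(4,5)]
    by (simp add: numeral_eq_enat)
  with assms(2) show False
    by simp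
qed

lemma strongly_regular_two_le_degree:
  assumes "strongly_regular n E k lam mu" "E x y" "E y z" "x \<noteq> z"
  shows "2 \<le> k"
proof -
  have edge: "E a b \<Longrightarrow> a \<in> {1..n} \<and> b \<in> {1..n}" "E a b \<Longrightarrow> E b a" for a b
    using assms(1) unfolding strongly_regular_def simple_graph_def by blast+
  have "2 = card {x, z}"
    using assms(4) by simp
  also have "\<dots> \<le> card (neighbours n E y)"
    using assms(2,3) edge unfolding neighbours_def by (intro card_mono) auto
  also have "\<dots> = k"
    using assms(1,2) edge(1) unfolding strongly_regular_def by blast
  finally show ?thesis .
qed

lemma strongly_regular_mu_nonzero:
  assumes "strongly_regular n E k lam mu" "E x y" "E y z" "x \<noteq> z" "\<not> E x z"
  shows "mu \<noteq> 0"
proof -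
  have edge: "E a b \<Longrightarrow> a \<in> {1..n} \<and> b \<in> {1..n}" "E a b \<Longrightarrow> E b a" for a b
    using assms(1) unfolding strongly_regular_def simple_graph_def by blast+
  have "y \<in> neighbours n E x \<inter> neighbours n E z"
    using assms(2,3) edge unfolding neighbours_def by blast
  then have "card (neighbours n E x \<inter> neighbours n E z) \<noteq> 0"
    unfolding neighbours_def by (auto simp: card_eq_0_iff)
  moreover have "card (neighbours n E x \<inter> neighbours n E z) = mu"
    using assms edge(1) unfolding strongly_regular_def by blast
  ultimately show ?thesis
    by simp
qed

(* What the argument uses of a strongly regular graph of girth five: lambda = 0, mu = 1 and
   minimum degree two. *)
locale girth5_diameter2_graph =
  fixes n :: nat and E :: "nat \<Rightarrow> nat \<Rightarrow> bool"
  assumes edge_vertices: "E x y \<Longrightarrow> x \<in> {1..n} \<and> y \<in> {1..n}"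
    and edge_sym: "E x y \<Longrightarrow> E y x"
    and triangle_free: "E x y \<Longrightarrow> E y z \<Longrightarrow> \<not> E x z"
    and common_neighbour_unique:
      "x \<noteq> z \<Longrightarrow> E x m \<Longrightarrow> E m z \<Longrightarrow> E x m' \<Longrightarrow> E m' z \<Longrightarrow> m = m'"
    and common_neighbour_exists:
      "x \<in> {1..n} \<Longrightarrow> z \<in> {1..n} \<Longrightarrow> x \<noteq> z \<Longrightarrow> \<not> E x z \<Longrightarrow> \<exists>m. E x m \<and> E m z"
    and two_neighbours: "x \<in> {1..n} \<Longrightarrow> \<exists>m m'. m \<noteq> m' \<and> E x m \<and> E x m'"
begin

lemma neighbour_not_adjacent:
  assumes "j \<in> {1..n}" "j \<noteq> l"
  obtains m where "E j m" "\<not> E m l"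
  using two_neighbours[OF assms(1)] common_neighbour_unique[OF assms(2)] by blast

lemma path3_avoiding_common_neighbour:
  assumes "i \<in> {1..n}" "x \<in> {1..n}" "i \<noteq> x" "\<not> E i x" "E i k" "E k x"
  obtains g h where "E g i" "g \<noteq> k" "E g h" "E h x" "h \<noteq> k"
proof -
  obtain g where gi: "E g i" and "g \<noteq> k"
    using two_neighbours[OF assms(1)] edge_sym by metis
  have "g \<noteq> x" "\<not> E g x"
    using edge_sym[OF gi] assms(4) common_neighbour_unique[OF assms(3) edge_sym[OF gi] _ assms(5,6)]
      \<open>g \<noteq> k\<close>
    by auto
  then obtain h where gh: "E g h" and hx: "E h x"
    using common_neighbour_exists[OF _ assms(2)] edge_vertices[OF gi] by blast
  have "h \<noteq> k"
    using triangle_free[OF gi assms(5)] gh by auto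
  then show ?thesis
    using that gi \<open>g \<noteq> k\<close> gh hx by blast
qed

end

lemma strongly_regular_girth5_imp_girth5_diameter2_graph:
  assumes srg: "strongly_regular n E k lam mu" and girth: "girth n E = 5"
  shows "girth5_diameter2_graph n E"
proof -
  have sg: "simple_graph n E"
    using srg unfolding strongly_regular_def by blast
  then have edge_vertices: "E x y \<Longrightarrow> x \<in> {1..n} \<and> y \<in> {1..n}"
    and edge_sym: "E x y \<Longrightarrow> E y x" for x y
    unfolding simple_graph_def by blast+
  have degree: "x \<in> {1..n} \<Longrightarrow> card (neighbours n E x) = k"
    and common: "x \<in> {1..n} \<Longrightarrow> z \<in> {1..n} \<Longrightarrow> x \<noteq> z \<Longrightarrow> \<not> E x z \<Longrightarrow>
      card (neighbours n E x \<inter> neighbours n E z) = mu" for x z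
    using srg unfolding strongly_regular_def by blast+
  have triangle_free: "E x y \<Longrightarrow> E y z \<Longrightarrow> \<not> E x z" for x y z
    using simple_graph_triangle_free[OF sg] girth by simp
  have "has_cycle n E 5"
    using has_cycle_girth[of n E 5] girth by (simp add: numeral_eq_enat)
  then obtain x y z where path: "E x y" "E y z" "x \<noteq> z"
    by (rule has_cycle_obtain_path)
  have "2 \<le> k"
    using strongly_regular_two_le_degree[OF srg path] .
  have "mu \<noteq> 0"
    using strongly_regular_mu_nonzero[OF srg path triangle_free[OF path(1,2)]] .
  show ?thesis
  proof
    show "\<exists>m. E x m \<and> E m z" if "x \<in> {1..n}" "z \<in> {1..n}" "x \<noteq> z" "\<not> E x z" for x z
    proof -
      have "neighbours n E x \<inter> neighbours n E z \<noteq> {}"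
        using common[OF that] \<open>mu \<noteq> 0\<close> by auto
      then show ?thesis
        unfolding neighbours_def using edge_sym by blast
    qed
    show "\<exists>m m'. m \<noteq> m' \<and> E x m \<and> E x m'" if "x \<in> {1..n}" for x
    proof -
      have "2 \<le> card (neighbours n E x)"
        using degree[OF that] \<open>2 \<le> k\<close> by simp
      then obtain m m' where "m \<in> neighbours n E x" "m' \<in> neighbours n E x" "m \<noteq> m'"
        by (metis card_le_Suc_iff numeral_2_eq_2 insertCI)
      then show ?thesis
        unfolding neighbours_def by blast
    qed
    show "m = m'" if "x \<noteq> z" "E x m" "E m z" "E x m'" "E m' z" for x z m m'
      using simple_graph_common_neighbour_unique[OF sg _ that] girth by simp
  qed (fact edge_vertices edge_sym triangle_free)+
qed

lemma commute_if_factor_through_idempotent: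
  fixes a b c g h :: "'a::semigroup_mult"
  assumes "c * c = c" "a * c = c * a" "b * c = c * b"
    and "a * b = a * c * b" "b * a = b * c * a"
    and "g * c = a * c" "c * g = a * c" "h * c = b * c" "c * h = b * c"
    and "g * h = h * g"
  shows "a * b = b * a"
proof -
  have "a * b = (a * c) * (b * c)"
    using assms(1,3,4) by (metis mult.assoc)
  also have "\<dots> = g * h * c"
    using assms(1,6,8,9) by (metis mult.assoc)
  also have "\<dots> = h * g * c"
    using assms(10) by simp
  also have "\<dots> = (b * c) * (a * c)"
    using assms(1,6,7,8) by (metis mult.assoc)
  also have "\<dots> = b * a"
    using assms(1,2,5) by (metis mult.assoc)
  finally show ?thesis .
qed

lemma graph_magic_unitary_transpose:
  "graph_magic_unitary star n E u \<Longrightarrow> graph_magic_unitary star n E (\<lambda>i j. u j i)"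
  unfolding graph_magic_unitary_def by blast

locale girth5_magic_unitary =
  cstar_algebra smul star nrm + girth5_diameter2_graph n E
  for smul :: "complex \<Rightarrow> 'a::ring_1 \<Rightarrow> 'a" and star nrm n E +
  fixes u :: "nat \<Rightarrow> nat \<Rightarrow> 'a"
  assumes magic_unitary: "graph_magic_unitary star n E u"
begin

lemma u_self_adjoint: "i \<in> {1..n} \<Longrightarrow> j \<in> {1..n} \<Longrightarrow> star (u i j) = u i j"
  using magic_unitary unfolding graph_magic_unitary_def by blast

lemma u_idem: "i \<in> {1..n} \<Longrightarrow> j \<in> {1..n} \<Longrightarrow> u i j * u i j = u i j"
  using magic_unitary unfolding graph_magic_unitary_def by blast

lemma u_idem_left: "i \<in> {1..n} \<Longrightarrow> j \<in> {1..n} \<Longrightarrow> u i j * (u i j * x) = u i j * x"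
  using u_idem by (metis mult.assoc)

lemma u_mult_eq_0:
  "i \<in> {1..n} \<Longrightarrow> j \<in> {1..n} \<Longrightarrow> k \<in> {1..n} \<Longrightarrow> l \<in> {1..n} \<Longrightarrow>
    E i k \<noteq> E j l \<Longrightarrow> u i j * u k l = 0"
  using magic_unitary unfolding graph_magic_unitary_def by blast

lemma mult_insert_row:
  assumes "i \<in> {1..n}"
  shows "x * y = (\<Sum>t\<in>{1..n}. x * u i t * y)"
proof -
  have "(\<Sum>t\<in>{1..n}. u i t) = 1"
    using magic_unitary assms unfolding graph_magic_unitary_def by blast
  then have "x * y = x * (\<Sum>t\<in>{1..n}. u i t) * y"
    by simp
  then show ?thesis
    by (simp add: sum_distrib_left sum_distrib_right)
qed

lemma mult_insert_col:
  assumes "j \<in> {1..n}"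
  shows "x * y = (\<Sum>t\<in>{1..n}. x * u t j * y)"
proof -
  have "(\<Sum>t\<in>{1..n}. u t j) = 1"
    using magic_unitary assms unfolding graph_magic_unitary_def by blast
  then have "x * y = x * (\<Sum>t\<in>{1..n}. u t j) * y"
    by simp
  then show ?thesis
    by (simp add: sum_distrib_left sum_distrib_right)
qed

lemma u_row_orth:
  assumes i: "i \<in> {1..n}" and j: "j \<in> {1..n}" and l: "l \<in> {1..n}" and "j \<noteq> l"
  shows "u i j * u i l = 0"
proof -
  obtain m where m: "E j m" "\<not> E m l"
    using neighbour_not_adjacent[OF j \<open>j \<noteq> l\<close>] .
  have m_vertex: "m \<in> {1..n}"
    using edge_vertices m(1) by blast
  have "u i j * u t m * u i l = 0" if t: "t \<in> {1..n}" for t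
  proof (cases "E i t")
    case True
    then have "u t m * u i l = 0"
      using u_mult_eq_0[OF t m_vertex i l] edge_sym[OF True] m(2) by simp
    then show ?thesis by (simp add: mult.assoc)
  next
    case False
    then have "u i j * u t m = 0"
      using u_mult_eq_0[OF i j t m_vertex] m(1) by simp
    then show ?thesis by simp
  qed
  then show ?thesis
    using mult_insert_col[OF m_vertex, of "u i j" "u i l"] by simp
qed

lemma u_col_orth:
  assumes "i \<in> {1..n}" "j \<in> {1..n}" "l \<in> {1..n}" "j \<noteq> l"
  shows "u j i * u l i = 0"
proof -
  interpret transpose: girth5_magic_unitary smul star nrm n E "\<lambda>i j. u j i"
    by unfold_locales (rule graph_magic_unitary_transpose[OF magic_unitary])
  show ?thesis
    using transpose.u_row_orth[OF assms] by simp
qed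

(* Expanding over row m, the term u m t survives only if t is a common neighbour of b and d. *)
lemma u_mult_through_common_neighbours:
  assumes "a \<noteq> c" "E a m" "E m c" and "b \<noteq> d" "E b m'" "E m' d"
  shows "u a b * u c d = u a b * u m m' * u c d"
proof -
  have V: "a \<in> {1..n}" "b \<in> {1..n}" "c \<in> {1..n}" "d \<in> {1..n}" "m \<in> {1..n}" "m' \<in> {1..n}"
    using edge_vertices[OF \<open>E a m\<close>] edge_vertices[OF \<open>E m c\<close>]
      edge_vertices[OF \<open>E b m'\<close>] edge_vertices[OF \<open>E m' d\<close>] by auto
  have vanish: "u a b * u m t * u c d = 0" if t: "t \<in> {1..n}" "t \<noteq> m'" for t
  proof (cases "E b t")
    case True
    then have "\<not> E t d"
      using common_neighbour_unique[OF \<open>b \<noteq> d\<close> True _ \<open>E b m'\<close> \<open>E m' d\<close>] t(2) by blast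
    then have "u m t * u c d = 0"
      using u_mult_eq_0[OF V(5) t(1) V(3,4)] \<open>E m c\<close> by simp
    then show ?thesis by (simp add: mult.assoc)
  next
    case False
    then have "u a b * u m t = 0"
      using u_mult_eq_0[OF V(1,2,5) t(1)] \<open>E a m\<close> by simp
    then show ?thesis by simp
  qed
  have "u a b * u c d = (\<Sum>t\<in>{1..n}. u a b * u m t * u c d)"
    by (rule mult_insert_row[OF V(5)])
  also have "\<dots> = (\<Sum>t\<in>{m'}. u a b * u m t * u c d)"
    by (rule sum.mono_neutral_right) (use V(6) vanish in auto)
  finally show ?thesis
    by simp
qed

lemma u_mult_insert_edge_projection:
  assumes ik: "E i k" and jl: "E j l" and ls: "E l s" "s \<noteq> j"
    and r: "r \<in> {1..n}" "r \<noteq> i"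
  shows "u k l * u r j * u i s = u k l * u r j * u k l * u i s"
proof (cases "E k r")
  case True
  have "u r j * u i s = u r j * u k l * u i s"
    using u_mult_through_common_neighbours[OF r(2) edge_sym[OF True] edge_sym[OF ik]
        ls(2)[symmetric] jl ls(1)] .
  then show ?thesis
    by (simp add: mult.assoc)
next
  case False
  have "k \<in> {1..n}" "l \<in> {1..n}" "j \<in> {1..n}"
    using edge_vertices[OF ik] edge_vertices[OF jl] by auto
  then have "u k l * u r j = 0"
    using u_mult_eq_0[of k l r j] r(1) False edge_sym[OF jl] by simp
  then show ?thesis
    by (simp add: mult.assoc)
qed

(* Expand u_ij u_kl u_is over column j, once with an extra factor u_kl before u_is: the terms
   r \<noteq> i agree by the previous lemma, and the term r = i of the first expansion is 0. *)
lemma u_edge_pair_row_vanish: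
  assumes ik: "E i k" and jl: "E j l" and s: "s \<in> {1..n}" "s \<noteq> j"
  shows "u i j * u k l * u i j * u k l * u i s = 0"
proof -
  have i: "i \<in> {1..n}" and j: "j \<in> {1..n}" and k: "k \<in> {1..n}" and l: "l \<in> {1..n}"
    using edge_vertices[OF ik] edge_vertices[OF jl] by auto
  show ?thesis
  proof (cases "E l s")
    case False
    then have "u k l * u i s = 0"
      using u_mult_eq_0[OF k l i s(1)] edge_sym[OF ik] by simp
    then show ?thesis
      by (simp add: mult.assoc)
  next
    case True
    have split_i: "(\<Sum>r\<in>{1..n}. f r) = f i + (\<Sum>r\<in>{1..n} - {i}. f r)" for f :: "nat \<Rightarrow> 'a"
      using i by (simp add: sum.remove)
    let ?rest = "\<Sum>r\<in>{1..n} - {i}. u i j * u k l * u r j * u k l * u i s"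
    have "u i j * u k l * u i s = u i j * u k l * u i j * u i s
        + (\<Sum>r\<in>{1..n} - {i}. u i j * u k l * u r j * u i s)"
      unfolding mult_insert_col[OF j, of "u i j * u k l" "u i s"] by (rule split_i)
    also have "(\<Sum>r\<in>{1..n} - {i}. u i j * u k l * u r j * u i s) = ?rest"
      using u_mult_insert_edge_projection[OF ik jl True s(2)]
      by (intro sum.cong) (simp_all add: mult.assoc)
    finally have "u i j * u k l * u i s = u i j * u k l * u i j * u i s + ?rest" .
    moreover have "u i j * u k l * u i s = u i j * u k l * (u k l * u i s)"
      using u_idem_left[OF k l] by (simp add: mult.assoc)
    also have "\<dots> = u i j * u k l * u i j * u k l * u i s + ?rest"
      unfolding mult_insert_col[OF j, of "u i j * u k l" "u k l * u i s"] split_i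
      by (simp add: mult.assoc)
    ultimately have "u i j * u k l * u i j * u i s = u i j * u k l * u i j * u k l * u i s"
      by simp
    moreover have "u i j * u i s = 0"
      using u_row_orth[OF i j s(1)] s(2) by simp
    ultimately show ?thesis
      by (simp add: mult.assoc)
  qed
qed

lemma u_commute_edge_pair:
  assumes ik: "E i k" and jl: "E j l"
  shows "u i j * u k l = u k l * u i j"
proof -
  have i: "i \<in> {1..n}" and j: "j \<in> {1..n}" and k: "k \<in> {1..n}" and l: "l \<in> {1..n}"
    using edge_vertices[OF ik] edge_vertices[OF jl] by auto
  let ?pqpq = "u i j * u k l * u i j * u k l"
  have "?pqpq = (\<Sum>s\<in>{1..n}. ?pqpq * u i s)"
    using mult_insert_row[OF i, of ?pqpq 1] by simp
  also have "\<dots> = (\<Sum>s\<in>{j}. ?pqpq * u i s)"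
    by (rule sum.mono_neutral_right) (use j u_edge_pair_row_vanish[OF ik jl] in auto)
  finally have "?pqpq = ?pqpq * u i j"
    by simp
  then show ?thesis
    by (rule projections_commute[OF u_self_adjoint[OF i j] u_idem[OF i j]
          u_self_adjoint[OF k l] u_idem[OF k l]])
qed

lemma u_commute_if_edge:
  assumes "i \<in> {1..n}" "j \<in> {1..n}" "k \<in> {1..n}" "l \<in> {1..n}" and "E i k \<or> E j l"
  shows "u i j * u k l = u k l * u i j"
proof (cases "E i k = E j l")
  case True
  with \<open>E i k \<or> E j l\<close> have "E i k" "E j l"
    by auto
  then show ?thesis
    by (rule u_commute_edge_pair)
next
  case False
  moreover have "E k i = E i k" "E l j = E j l"
    using edge_sym by blast+
  ultimately show ?thesis
    using u_mult_eq_0[OF assms(1-4)] u_mult_eq_0[OF assms(3,4,1,2)] by simp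
qed

lemma neighbours_row_sum_mult:
  assumes gi: "E g i" and b: "b \<in> {1..n}"
  shows "(\<Sum>t\<in>{t\<in>{1..n}. E b t}. u g t * u i b) = u i b"
proof -
  have g: "g \<in> {1..n}" and i: "i \<in> {1..n}"
    using edge_vertices[OF gi] by auto
  have "u g t * u i b = 0" if "t \<in> {1..n} - {t\<in>{1..n}. E b t}" for t
    using that u_mult_eq_0[OF g _ i b] gi edge_sym[of t b] by auto
  then have "(\<Sum>t\<in>{t\<in>{1..n}. E b t}. u g t * u i b) = (\<Sum>t\<in>{1..n}. u g t * u i b)"
    by (intro sum.mono_neutral_left) auto
  also have "\<dots> = u i b"
    using mult_insert_row[OF g, of 1 "u i b"] by simp
  finally show ?thesis .
qed

(* Each u_gt with t ~ b, t \<noteq> l factors through u_ib in front of u_kl (paths g - i - k and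
   t - b - l), and the missing term u_gl u_ib u_kl vanishes. *)
lemma neighbour_row_sum_mult:
  assumes ik: "E i k" and bl: "E b l" and gi: "E g i" and "g \<noteq> k"
  shows "(\<Sum>t\<in>{t\<in>{1..n}. E b t \<and> t \<noteq> l}. u g t) * u k l = u i b * u k l"
proof -
  define N where "N = {t\<in>{1..n}. E b t \<and> t \<noteq> l}"
  have i: "i \<in> {1..n}" and k: "k \<in> {1..n}" and b: "b \<in> {1..n}" and l: "l \<in> {1..n}"
    and g: "g \<in> {1..n}"
    using edge_vertices[OF ik] edge_vertices[OF bl] edge_vertices[OF gi] by auto
  have "{t\<in>{1..n}. E b t} = insert l N" "l \<notin> N" "finite N"
    unfolding N_def using bl l by auto
  then have "u g l * u i b + (\<Sum>t\<in>N. u g t * u i b) = u i b"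
    using neighbours_row_sum_mult[OF gi b] by simp
  then have row_g: "(\<Sum>t\<in>N. u g t * u i b) = u i b - u g l * u i b"
    by (simp add: algebra_simps)
  have "u g l * u i b * u k l = u g l * u k l * u i b"
    using u_commute_if_edge[OF i b k l] ik by (simp add: mult.assoc)
  also have "\<dots> = 0"
    using u_col_orth[OF l g k \<open>g \<noteq> k\<close>] by simp
  finally have gl_vanish: "u g l * u i b * u k l = 0" .
  have "(\<Sum>t\<in>N. u g t) * u k l = (\<Sum>t\<in>N. u g t * u k l)"
    by (simp add: sum_distrib_right)
  also have "\<dots> = (\<Sum>t\<in>N. u g t * u i b * u k l)"
  proof (rule sum.cong[OF refl])
    fix t assume "t \<in> N"
    then have "t \<noteq> l" "E t b"
      unfolding N_def using edge_sym by auto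
    then show "u g t * u k l = u g t * u i b * u k l"
      using u_mult_through_common_neighbours[OF \<open>g \<noteq> k\<close> gi ik _ _ bl] by blast
  qed
  also have "\<dots> = (u i b - u g l * u i b) * u k l"
    unfolding row_g[symmetric] by (simp add: sum_distrib_right)
  also have "\<dots> = u i b * u k l"
    using gl_vanish by (simp add: algebra_simps)
  finally show ?thesis
    unfolding N_def .
qed

lemma mult_neighbour_row_sum:
  assumes ik: "E i k" and bl: "E b l" and gi: "E g i" and "g \<noteq> k"
  shows "u k l * (\<Sum>t\<in>{t\<in>{1..n}. E b t \<and> t \<noteq> l}. u g t) = u i b * u k l"
proof -
  let ?G = "\<Sum>t\<in>{t\<in>{1..n}. E b t \<and> t \<noteq> l}. u g t"
  have i: "i \<in> {1..n}" and k: "k \<in> {1..n}" and b: "b \<in> {1..n}" and l: "l \<in> {1..n}"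
    and g: "g \<in> {1..n}"
    using edge_vertices[OF ik] edge_vertices[OF bl] edge_vertices[OF gi] by auto
  have "star ?G = ?G"
    using g by (simp add: star_sum u_self_adjoint)
  then have "u k l * ?G = star (?G * u k l)"
    by (simp add: star_mult u_self_adjoint[OF k l])
  also have "\<dots> = star (u i b * u k l)"
    using neighbour_row_sum_mult[OF assms] by simp
  also have "\<dots> = u k l * u i b"
    by (simp add: star_mult u_self_adjoint[OF k l] u_self_adjoint[OF i b])
  also have "\<dots> = u i b * u k l"
    using u_commute_if_edge[OF i b k l] ik by simp
  finally show ?thesis .
qed

lemma row_sums_commute:
  assumes gh: "E g h" and "A \<subseteq> {1..n}" "B \<subseteq> {1..n}"
  shows "(\<Sum>t\<in>A. u g t) * (\<Sum>w\<in>B. u h w) = (\<Sum>w\<in>B. u h w) * (\<Sum>t\<in>A. u g t)"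
proof -
  have "(\<Sum>t\<in>A. u g t) * (\<Sum>w\<in>B. u h w) = (\<Sum>t\<in>A. \<Sum>w\<in>B. u g t * u h w)"
    by (rule sum_product)
  also have "\<dots> = (\<Sum>t\<in>A. \<Sum>w\<in>B. u h w * u g t)"
    using assms edge_vertices[OF gh] u_commute_if_edge[of g _ h] by (intro sum.cong refl) blast
  also have "\<dots> = (\<Sum>w\<in>B. u h w) * (\<Sum>t\<in>A. u g t)"
    by (subst sum.swap) (rule sum_product[symmetric])
  finally show ?thesis .
qed

(* Here k and l are the common neighbours of i, x and of j, y; the partial row sums over the
   adjacent rows g and h play the roles of u_ij and u_xy modulo u_kl. *)
lemma u_commute_nonadjacent:
  assumes i: "i \<in> {1..n}" and j: "j \<in> {1..n}" and x: "x \<in> {1..n}" and y: "y \<in> {1..n}"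
    and "i \<noteq> x" "\<not> E i x" and "j \<noteq> y" "\<not> E j y"
  shows "u i j * u x y = u x y * u i j"
proof -
  obtain k where ik: "E i k" and kx: "E k x"
    using common_neighbour_exists[OF i x \<open>i \<noteq> x\<close> \<open>\<not> E i x\<close>] by blast
  obtain l where jl: "E j l" and ly: "E l y"
    using common_neighbour_exists[OF j y \<open>j \<noteq> y\<close> \<open>\<not> E j y\<close>] by blast
  obtain g h where gi: "E g i" and "g \<noteq> k" and gh: "E g h" and hx: "E h x" and "h \<noteq> k"
    using path3_avoiding_common_neighbour[OF i x \<open>i \<noteq> x\<close> \<open>\<not> E i x\<close> ik kx] .
  have k: "k \<in> {1..n}" and l: "l \<in> {1..n}"
    using edge_vertices[OF ik] edge_vertices[OF jl] by auto
  have xk: "E x k" and yl: "E y l"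
    using edge_sym kx ly by blast+
  let ?G = "\<Sum>t\<in>{t\<in>{1..n}. E j t \<and> t \<noteq> l}. u g t"
  let ?H = "\<Sum>t\<in>{t\<in>{1..n}. E y t \<and> t \<noteq> l}. u h t"
  show ?thesis
  proof (rule commute_if_factor_through_idempotent)
    show "u k l * u k l = u k l"
      by (rule u_idem[OF k l])
    show "u i j * u k l = u k l * u i j"
      by (rule u_commute_edge_pair[OF ik jl])
    show "u x y * u k l = u k l * u x y"
      by (rule u_commute_edge_pair[OF xk yl])
    show "u i j * u x y = u i j * u k l * u x y"
      by (rule u_mult_through_common_neighbours[OF \<open>i \<noteq> x\<close> ik kx \<open>j \<noteq> y\<close> jl ly])
    show "u x y * u i j = u x y * u k l * u i j"
      using u_mult_through_common_neighbours[OF \<open>i \<noteq> x\<close>[symmetric] xk edge_sym[OF ik]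
          \<open>j \<noteq> y\<close>[symmetric] yl edge_sym[OF jl]] .
    show "?G * u k l = u i j * u k l" "u k l * ?G = u i j * u k l"
      using neighbour_row_sum_mult[OF ik jl gi \<open>g \<noteq> k\<close>]
        mult_neighbour_row_sum[OF ik jl gi \<open>g \<noteq> k\<close>] by simp_all
    show "?H * u k l = u x y * u k l" "u k l * ?H = u x y * u k l"
      using neighbour_row_sum_mult[OF xk yl hx \<open>h \<noteq> k\<close>]
        mult_neighbour_row_sum[OF xk yl hx \<open>h \<noteq> k\<close>] by simp_all
    show "?G * ?H = ?H * ?G"
      by (rule row_sums_commute[OF gh]) auto
  qed
qed

lemma u_commute:
  assumes i: "i \<in> {1..n}" and j: "j \<in> {1..n}" and k: "k \<in> {1..n}" and l: "l \<in> {1..n}"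
  shows "u i j * u k l = u k l * u i j"
proof -
  consider "E i k \<or> E j l" | "i = k" | "j = l" | "i \<noteq> k" "\<not> E i k" "j \<noteq> l" "\<not> E j l"
    by blast
  then show ?thesis
  proof cases
    case 1
    then show ?thesis by (rule u_commute_if_edge[OF i j k l])
  next
    case 2
    then show ?thesis
      using u_row_orth[OF i j l] u_row_orth[OF i l j] by (cases "j = l") auto
  next
    case 3
    then show ?thesis
      using u_col_orth[OF j i k] u_col_orth[OF j k i] by (cases "i = k") auto
  next
    case 4
    then show ?thesis by (rule u_commute_nonadjacent[OF i j k l])
  qed
qed

end

theorem theorem4p9:
  fixes n :: nat and E :: "nat \<Rightarrow> nat \<Rightarrow> bool"
    and smul :: "complex \<Rightarrow> 'a::ring_1 \<Rightarrow> 'a" and star :: "'a \<Rightarrow> 'a" and nrm :: "'a \<Rightarrow> real"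
    and u :: "nat \<Rightarrow> nat \<Rightarrow> 'a"
  assumes "\<exists>k lam mu. strongly_regular n E k lam mu"
    and "girth n E = 5"
    and "cstar_algebra smul star nrm"
    and "graph_magic_unitary star n E u"
  shows "\<forall>i\<in>{1..n}. \<forall>j\<in>{1..n}. \<forall>k\<in>{1..n}. \<forall>l\<in>{1..n}. u i j * u k l = u k l * u i j"
proof -
  obtain k lam mu where "strongly_regular n E k lam mu"
    using assms(1) by blast
  then have "girth5_diameter2_graph n E"
    using assms(2) by (rule strongly_regular_girth5_imp_girth5_diameter2_graph)
  then interpret girth5_magic_unitary smul star nrm n E u
    using assms(3,4) by (intro girth5_magic_unitary.intro girth5_magic_unitary_axioms.intro)
  show ?thesis
    using u_commute by blast
qed

end
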